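(* Let admission prices $c_1>c_2>\dots>c_N$ be given. Let $i_1<i_2$ be customer classes (so $\beta_{i_1}>\beta_{i_2}$) and $j_1<j_2$ queues (so $c_{j_1}>c_{j_2}$). Then there is no Wardrop equilibrium $P^W$ with both $p^W_{i_1j_2}>0$ and $p^W_{i_2j_1}>0$.
   Context: Model: $M$ customer classes, $N$ queues. Class $i$ arrivals are Poisson of rate $\lambda_i>0$, independent across classes; class $i$ has delay sensitivity $\beta_i>0$ with $\beta_1>\dots>\beta_M$. A routing matrix is a right stochastic $M\times N$ matrix $P=[p_{ij}]$; the arrival rate at queue $j$ is $\gamma_j=\sum_i\lambda_ip_{ij}$. Queue $j$ has a cost function $D_j$ (monotone increasing, continuously differentiable with strictly positive derivative in the interior of its domain) and charges a class-independent admission price $c_j$. A class-$i$ customer joining queue $j$ incurs cost $c_j+\beta_iD_j(\gamma_j)$. $P$ is a Wardrop equilibrium if for all $i,j,k$: $p_{ij}>0$ implies $c_j+\beta_iD_j(\gamma_j)\le c_k+\beta_iD_k(\gamma_k)$. *)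

theory Defs
  imports "HOL-Analysis.Analysis"
begin

text \<open>Classes are indexed 0..<M, queues 0..<N (0-based). A routing matrix is
  a function P :: nat => nat => real, P i j = p_ij.\<close>

definition right_stochastic :: "nat \<Rightarrow> nat \<Rightarrow> (nat \<Rightarrow> nat \<Rightarrow> real) \<Rightarrow> bool" where
  "right_stochastic M N P \<longleftrightarrow>
     (\<forall>i<M. (\<forall>j<N. P i j \<ge> 0) \<and> (\<Sum>j<N. P i j) = 1)"

definition arrival_rate :: "nat \<Rightarrow> (nat \<Rightarrow> real) \<Rightarrow> (nat \<Rightarrow> nat \<Rightarrow> real) \<Rightarrow> nat \<Rightarrow> real" where
  "arrival_rate M lam P j = (\<Sum>i<M. lam i * P i j)"

definition cost_function :: "real set \<Rightarrow> (real \<Rightarrow> real) \<Rightarrow> bool" where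
  "cost_function S f \<longleftrightarrow> is_interval S \<and> mono_on S f \<and>
     (\<exists>f'. continuous_on (interior S) f' \<and>
        (\<forall>x\<in>interior S. (f has_real_derivative f' x) (at x) \<and> f' x > 0))"

definition wardrop_equilibrium ::
  "nat \<Rightarrow> nat \<Rightarrow> (nat \<Rightarrow> real) \<Rightarrow> (nat \<Rightarrow> real) \<Rightarrow> (nat \<Rightarrow> real)
    \<Rightarrow> (nat \<Rightarrow> real \<Rightarrow> real) \<Rightarrow> (nat \<Rightarrow> nat \<Rightarrow> real) \<Rightarrow> bool" where
  "wardrop_equilibrium M N lam beta c D P \<longleftrightarrow> right_stochastic M N P \<and>
     (\<forall>i<M. \<forall>j<N. \<forall>k<N. P i j > 0 \<longrightarrow>
        c j + beta i * D j (arrival_rate M lam P j) \<le> c k + beta i * D k (arrival_rate M lam P k))"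

end

theory Submission
  imports Defs
begin

(* Proof idea (a single-crossing, or exchange, argument).
   Fix a Wardrop equilibrium and write x1, x2 for the delays of queues j1, j2.
   If a class-i1 customer uses the cheap queue j2 and a class-i2 customer uses
   the expensive queue j1, the equilibrium conditions give
     c j2 + beta i1 * x2 <= c j1 + beta i1 * x1   and
     c j1 + beta i2 * x1 <= c j2 + beta i2 * x2.
   Adding them yields (beta i1 - beta i2) * (x2 - x1) <= 0, so x2 <= x1, while
   the second inequality with c j1 > c j2 and beta i2 > 0 forces x2 > x1.
   Only the ordering of prices and sensitivities matters; the delay functions
   enter solely through the values they take at the equilibrium loads. *)

lemma no_crossing_choices:
  fixes b1 b2 ca cb xa xb :: real
  assumes sens: "b1 > b2" "b2 > 0"
    and price: "ca > cb"
    and pref1: "cb + b1 * xb \<le> ca + b1 * xa"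
    and pref2: "ca + b2 * xa \<le> cb + b2 * xb"
  shows False
proof -
  have "b2 * (xb - xa) \<ge> ca - cb"
    using pref2 by (simp add: algebra_simps)
  then have "b2 * (xb - xa) > 0"
    using price by linarith
  then have delay_gap: "xb - xa > 0"
    using sens by (simp add: zero_less_mult_iff)
  have "(b1 - b2) * (xb - xa) \<le> 0"
    using pref1 pref2 by (simp add: algebra_simps)
  moreover have "(b1 - b2) * (xb - xa) > 0"
    using sens delay_gap by simp
  ultimately show False
    by linarith
qed

lemma wardrop_no_profitable_deviation:
  assumes "wardrop_equilibrium M N lam beta c D P"
    and "i < M" "j < N" "k < N" "P i j > 0"
  shows "c j + beta i * D j (arrival_rate M lam P j)
           \<le> c k + beta i * D k (arrival_rate M lam P k)"
  using assms unfolding wardrop_equilibrium_def by blast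

theorem theorem3:
  fixes M N :: nat and lam beta c :: "nat \<Rightarrow> real"
    and D :: "nat \<Rightarrow> real \<Rightarrow> real" and S :: "nat \<Rightarrow> real set"
    and i1 i2 j1 j2 :: nat
  assumes lam_pos: "\<forall>i<M. lam i > 0"
    and beta_pos: "\<forall>i<M. beta i > 0"
    and beta_dec: "\<forall>i<M. \<forall>i'<M. i < i' \<longrightarrow> beta i > beta i'"
    and cost: "\<forall>j<N. cost_function (S j) (D j)"
    and c_dec: "\<forall>j<N. \<forall>j'<N. j < j' \<longrightarrow> c j > c j'"
    and classes: "i1 < i2" "i2 < M"
    and queues: "j1 < j2" "j2 < N"
  shows "\<not> (\<exists>P. wardrop_equilibrium M N lam beta c D P \<and> P i1 j2 > 0 \<and> P i2 j1 > 0)"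
proof
  assume "\<exists>P. wardrop_equilibrium M N lam beta c D P \<and> P i1 j2 > 0 \<and> P i2 j1 > 0"
  then obtain P where W: "wardrop_equilibrium M N lam beta c D P"
    and use12: "P i1 j2 > 0" and use21: "P i2 j1 > 0"
    by blast
  have idx: "i1 < M" "j1 < N"
    using classes queues by auto
  have "beta i1 > beta i2" "beta i2 > 0"
    using beta_dec beta_pos classes idx by auto
  moreover have "c j1 > c j2"
    using c_dec queues idx by auto
  moreover have "c j2 + beta i1 * D j2 (arrival_rate M lam P j2)
                   \<le> c j1 + beta i1 * D j1 (arrival_rate M lam P j1)"
    using wardrop_no_profitable_deviation[OF W] use12 idx queues by blast
  moreover have "c j1 + beta i2 * D j1 (arrival_rate M lam P j1)
                   \<le> c j2 + beta i2 * D j2 (arrival_rate M lam P j2)"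
    using wardrop_no_profitable_deviation[OF W] use21 idx classes queues by blast
  ultimately show False
    by (rule no_crossing_choices)
qed

end
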